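(* Let $\epsilon\in(0,1-2^{-1/2})$ and $(a,b)\in\mathbf B_\epsilon$. Then with $\eta=3^{3/2}2^{-1}$, $$\operatorname{ess\,sup}_{z\in\mathbb T}\frac{|b(z)|}{|a(z)|}\le 1-\eta\epsilon.$$
   Context: $\mathbb T$ unit circle, $\mathbb D$ open unit disc, $\mathbb D^*=\{\overline z^{-1}:z\in\mathbb D\}\cup\{\infty\}$, $a^*(z)=\overline{a(\overline z^{-1})}$. $H^2(\mathbb D)$: functions in $L^2(\mathbb T)$ with vanishing negative Fourier coefficients; $H^2(\mathbb D^* )$: $f$ with $f^*\in H^2(\mathbb D)$, extended analytically to $\mathbb D^*$ with $f(\infty)=\overline{f^*(0)}$. $\mathbf L$: pairs $(a,b)$ of measurable functions on $\mathbb T$ with $aa^*+bb^*=1$ a.e. on $\mathbb T$, $a\in H^2(\mathbb D^* )$, $a(\infty)>0$. $\mathbf B$: $(a,b)\in\mathbf L$ with $\inf_{z\in\mathbb D^*}|a(z)|^2>\frac12$. For $\epsilon>0$, $\mathbf B_\epsilon$ is the set of $(a,b)\in\mathbf B$ with $\inf_{z\in\mathbb D^*}|a(z)|\ge 2^{-1/2}+\epsilon$. *)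

theory Defs
  imports "HOL-Analysis.Analysis" "HOL-Probability.Essential_Supremum"
begin

definition T_meas :: "complex measure" where
  "T_meas = distr (restrict_space lborel {0..<2*pi}) borel cis"

definition fourier_coeff :: "(complex \<Rightarrow> complex) \<Rightarrow> int \<Rightarrow> complex" where
  "fourier_coeff f n = (integral\<^sup>L T_meas (\<lambda>z. f z * z powi (- n))) / complex_of_real (2*pi)"

definition L2_T :: "(complex \<Rightarrow> complex) \<Rightarrow> bool" where
  "L2_T f \<longleftrightarrow> f \<in> borel_measurable T_meas \<and> integrable T_meas (\<lambda>z. (cmod (f z))^2)"

definition H2_D :: "(complex \<Rightarrow> complex) \<Rightarrow> bool" where
  "H2_D f \<longleftrightarrow> L2_T f \<and> (\<forall>n::int. n < 0 \<longrightarrow> fourier_coeff f n = 0)"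

definition star :: "(complex \<Rightarrow> complex) \<Rightarrow> complex \<Rightarrow> complex" where
  "star f z = cnj (f (1 / cnj z))"

definition H2_Dstar :: "(complex \<Rightarrow> complex) \<Rightarrow> bool" where
  "H2_Dstar f \<longleftrightarrow> H2_D (star f)"

definition H2_D_ext :: "(complex \<Rightarrow> complex) \<Rightarrow> complex \<Rightarrow> complex" where
  "H2_D_ext f w = (\<Sum>n. fourier_coeff f (int n) * w ^ n)"

definition H2_Dstar_ext :: "(complex \<Rightarrow> complex) \<Rightarrow> complex \<Rightarrow> complex" where
  "H2_Dstar_ext f z = cnj (H2_D_ext (star f) (1 / cnj z))"

text \<open>Value at infinity: f(\<infinity>) = conj (f^*(0)).\<close>
definition H2_Dstar_inf :: "(complex \<Rightarrow> complex) \<Rightarrow> complex" where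
  "H2_Dstar_inf f = cnj (H2_D_ext (star f) 0)"

definition inf_abs_Dstar :: "(complex \<Rightarrow> complex) \<Rightarrow> real" where
  "inf_abs_Dstar f = Inf (insert (cmod (H2_Dstar_inf f)) {cmod (H2_Dstar_ext f z) | z. 1 < cmod z})"

definition inf_abs2_Dstar :: "(complex \<Rightarrow> complex) \<Rightarrow> real" where
  "inf_abs2_Dstar f = Inf (insert ((cmod (H2_Dstar_inf f))^2) {(cmod (H2_Dstar_ext f z))^2 | z. 1 < cmod z})"

definition class_L :: "(complex \<Rightarrow> complex) \<Rightarrow> (complex \<Rightarrow> complex) \<Rightarrow> bool" where
  "class_L a b \<longleftrightarrow> a \<in> borel_measurable T_meas \<and> b \<in> borel_measurable T_meas
     \<and> (AE z in T_meas. a z * star a z + b z * star b z = 1)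
     \<and> H2_Dstar a \<and> H2_Dstar_inf a \<in> \<real> \<and> Re (H2_Dstar_inf a) > 0"

definition class_B :: "(complex \<Rightarrow> complex) \<Rightarrow> (complex \<Rightarrow> complex) \<Rightarrow> bool" where
  "class_B a b \<longleftrightarrow> class_L a b \<and> inf_abs2_Dstar a > 1/2"

definition class_B_eps :: "real \<Rightarrow> (complex \<Rightarrow> complex) \<Rightarrow> (complex \<Rightarrow> complex) \<Rightarrow> bool" where
  "class_B_eps \<epsilon> a b \<longleftrightarrow> class_B a b \<and> inf_abs_Dstar a \<ge> 2 powr (-1/2) + \<epsilon>"

end

theory Submission
  imports Defs
begin

text \<open>
  Let \<open>g = a\<^sup>*\<close>, a function in \<open>H\<^sup>2(D)\<close>. Its extension into the disc \<open>D\<close> is the Poisson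
  integral of its boundary values, so \<open>P\<^sub>r|g|(s) \<ge> |g(r e\<^bsup>is\<^esup>)| \<ge> inf\<^bsub>D*\<^esub> |a| \<ge> 2\<^bsup>-1/2\<^esup> + \<epsilon>\<close>
  for all \<open>r < 1\<close> and all \<open>s\<close>. Integrating this against the indicator function of an arc and
  letting \<open>r \<rightarrow> 1\<close> (the Poisson kernel is an approximate identity) gives the same lower bound for
  the averages of \<open>|g| = |a|\<close> over arcs of \<open>T\<close>, so \<open>|a| \<ge> 2\<^bsup>-1/2\<^esup> + \<epsilon>\<close> almost everywhere on
  \<open>T\<close> by Lebesgue's differentiation theorem. Since \<open>|a|\<^sup>2 + |b|\<^sup>2 = 1\<close> a.e. on \<open>T\<close>, we have
  \<open>|b|/|a| = \<psi>(|a|)\<close> with \<open>\<psi>(x) = \<surd>(1 - x\<^sup>2)/x\<close>, and the bound follows from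
  \<open>\<psi>(2\<^bsup>-1/2\<^esup>) = 1\<close> and \<open>\<psi>'(x) = -1/(x\<^sup>2 \<surd>(1 - x\<^sup>2)) \<le> -3\<^bsup>3/2\<^esup>/2\<close>.
\<close>

section \<open>The function \<open>\<surd>(1 - x\<^sup>2)/x\<close>\<close>

lemma inverse_square_sqrt_ge:
  fixes u :: real
  assumes "0 < u" "u < 1"
  shows "3 * sqrt 3 / 2 \<le> 1 / (u^2 * sqrt (1 - u^2))"
proof -
  have s: "0 < sqrt (1 - u^2)" using assms by (simp add: power_less_one_iff abs_less_iff)
  have "4 - 27 * (u^2)^2 * (1 - u^2) = (3 * u^2 - 2)^2 * (3 * u^2 + 1)"
    by (simp add: power2_eq_square algebra_simps)
  also have "\<dots> \<ge> 0" using assms by simp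
  finally have "(u^2)^2 * (1 - u^2) \<le> 4/27" by simp
  hence "(u^2 * sqrt (1 - u^2))^2 \<le> (2 / (3 * sqrt 3))^2"
    using assms by (simp add: power_mult_distrib power_divide abs_square_le_1)
  hence "u^2 * sqrt (1 - u^2) \<le> 2 / (3 * sqrt 3)"
    by (rule power2_le_imp_le) simp
  thus ?thesis using s assms by (simp add: field_simps)
qed

lemma sqrt_one_minus_square_div_le:
  fixes x :: real
  assumes "1 / sqrt 2 \<le> x" "x \<le> 1"
  shows "sqrt (1 - x^2) / x \<le> 1 - (3 * sqrt 3 / 2) * (x - 1 / sqrt 2)"
proof -
  define \<phi> where "\<phi> u = sqrt (1 - u^2) / u + (3 * sqrt 3 / 2) * u" for u :: real
  have pos: "0 < 1 / sqrt (2::real)" by simp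
  have "\<phi> x \<le> \<phi> (1 / sqrt 2)"
  proof (rule DERIV_nonpos_imp_decreasing_open[OF assms(1)])
    show "continuous_on {1 / sqrt 2..x} \<phi>"
      unfolding \<phi>_def using pos by (intro continuous_intros) auto
    fix u assume u: "1 / sqrt 2 < u" "u < x"
    hence u01: "0 < u" "u < 1" using pos assms(2) by linarith+
    have p: "0 < 1 - u^2" using u01 by (simp add: abs_square_less_1)
    have "DERIV \<phi> u :> - 1 / (u^2 * sqrt (1 - u^2)) + 3 * sqrt 3 / 2"
    proof -
      have "DERIV \<phi> u :> ((inverse (sqrt (1 - u^2)) / 2) * (- (2 * u)) * u - sqrt (1 - u^2)) / (u * u)
                           + 3 * sqrt 3 / 2"
        unfolding \<phi>_def using u01 p
        by (auto intro!: derivative_eq_intros simp: power2_eq_square)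
      moreover have "((inverse (sqrt (1 - u^2)) / 2) * (- (2 * u)) * u - sqrt (1 - u^2)) / (u * u)
                     = - 1 / (u^2 * sqrt (1 - u^2))"
        using u01 p by (simp add: field_simps power2_eq_square)
      ultimately show ?thesis by simp
    qed
    moreover have "- 1 / (u^2 * sqrt (1 - u^2)) + 3 * sqrt 3 / 2 \<le> 0"
      using inverse_square_sqrt_ge[OF u01] by simp
    ultimately show "\<exists>y. DERIV \<phi> u :> y \<and> y \<le> 0" by blast
  qed
  moreover have "sqrt (1 - (1 / sqrt 2)^2) / (1 / sqrt (2::real)) = 1"
    by (simp add: power_divide real_sqrt_divide)
  ultimately show ?thesis unfolding \<phi>_def by (simp add: algebra_simps diff_divide_distrib)
qed

lemma ratio_le_of_sum_squares_eq_1: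
  fixes x y \<epsilon> :: real
  assumes "0 \<le> y" "x^2 + y^2 = 1" "2 powr (-1/2) + \<epsilon> \<le> x" "0 \<le> \<epsilon>"
  shows "y / x \<le> 1 - (3 powr (3/2) / 2) * \<epsilon>"
proof -
  have "(2::real) powr (-1/2) = inverse (2 powr (1/2))"
    by (simp add: powr_minus flip: powr_minus_divide)
  hence two: "(2::real) powr (-1/2) = 1 / sqrt 2"
    by (simp add: powr_half_sqrt inverse_eq_divide)
  have "(3::real) powr (3/2) = 3 powr (1 + 1/2)" by simp
  also have "\<dots> = 3 powr 1 * 3 powr (1/2)" by (rule powr_add)
  finally have three: "(3::real) powr (3/2) = 3 * sqrt 3"
    by (simp add: powr_half_sqrt)
  have "0 < 1 / sqrt (2::real)" by simp
  hence x: "1 / sqrt 2 \<le> x" "x \<le> 1"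
    using assms(2-4) abs_square_le_1[of x] zero_le_power2[of y] two by auto
  have "1 - x^2 = y^2" using assms(2) by simp
  hence "y = sqrt (1 - x^2)" using assms(1) by simp
  hence "y / x \<le> 1 - (3 * sqrt 3 / 2) * (x - 1 / sqrt 2)"
    using sqrt_one_minus_square_div_le[OF x] by simp
  also have "\<dots> \<le> 1 - (3 * sqrt 3 / 2) * \<epsilon>"
    using assms(3) two by (intro diff_left_mono mult_left_mono) auto
  finally show ?thesis using three by simp
qed

section \<open>The Poisson kernel\<close>

lemma borel_measurable_cis [measurable (raw)]:
  "f \<in> borel_measurable M \<Longrightarrow> (\<lambda>x. cis (f x)) \<in> borel_measurable M"
  using borel_measurable_continuous_onI[OF continuous_on_cis[OF continuous_on_id]]
    measurable_compose by blast

definition poisson_kernel :: "real \<Rightarrow> real \<Rightarrow> real" where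
  "poisson_kernel r \<theta> = (1 - r^2) / (cmod (1 - complex_of_real r * cis \<theta>))^2"

lemma norm_one_minus_cis_square:
  "(cmod (1 - complex_of_real r * cis \<theta>))^2 = 1 - 2 * r * cos \<theta> + r^2"
proof -
  have "(cmod (1 - complex_of_real r * cis \<theta>))^2 = (1 - r * cos \<theta>)^2 + (r * sin \<theta>)^2"
    by (simp add: cmod_power2)
  also have "\<dots> = 1 - 2 * r * cos \<theta> + r^2"
    using sin_cos_squared_add[of \<theta>] by algebra
  finally show ?thesis .
qed

lemma one_minus_cis_nonzero:
  assumes "\<bar>r\<bar> < 1"
  shows "1 - complex_of_real r * cis \<theta> \<noteq> 0"
proof
  assume "1 - complex_of_real r * cis \<theta> = 0"
  hence "norm (complex_of_real r * cis \<theta>) = 1" by (simp add: right_minus_eq)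
  with assms show False by (simp add: norm_mult)
qed

lemma poisson_kernel_nonneg: "\<bar>r\<bar> \<le> 1 \<Longrightarrow> 0 \<le> poisson_kernel r \<theta>"
  unfolding poisson_kernel_def by (simp add: abs_square_le_1)

lemma continuous_on_poisson_kernel: "\<bar>r\<bar> < 1 \<Longrightarrow> continuous_on UNIV (poisson_kernel r)"
  unfolding poisson_kernel_def using one_minus_cis_nonzero[of r]
  by (intro continuous_intros) auto

lemma borel_measurable_poisson_kernel [measurable]:
  "\<bar>r\<bar> < 1 \<Longrightarrow> poisson_kernel r \<in> borel_measurable borel"
  using continuous_on_poisson_kernel borel_measurable_continuous_onI by blast

lemma set_integrable_poisson_kernel:
  "\<bar>r\<bar> < 1 \<Longrightarrow> set_integrable lborel {a..b} (\<lambda>s. poisson_kernel r (s - t))"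
  by (rule borel_integrable_atLeastAtMost', rule continuous_on_compose2[OF continuous_on_poisson_kernel])
     (auto intro!: continuous_intros)

lemma poisson_kernel_le:
  assumes "0 \<le> r" "r < 1"
  shows "poisson_kernel r \<theta> \<le> (1 + r) / (1 - r)"
proof -
  have "r * cos \<theta> \<le> r" using assms by (simp add: mult_left_le)
  hence "(1 - r)^2 \<le> 1 - 2 * r * cos \<theta> + r^2"
    by (simp add: power2_eq_square algebra_simps)
  moreover have "0 < (1 - r)^2" using assms by simp
  moreover have "0 < 1 - 2 * r * cos \<theta> + r^2" using calculation by linarith
  ultimately have "poisson_kernel r \<theta> \<le> (1 - r^2) / (1 - r)^2"
    unfolding poisson_kernel_def norm_one_minus_cis_square using assms
    by (intro divide_left_mono mult_pos_pos) (auto simp: abs_square_le_1)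
  also have "\<dots> = ((1 + r) * (1 - r)) / ((1 - r) * (1 - r))"
    by (simp add: power2_eq_square algebra_simps)
  also have "\<dots> = (1 + r) / (1 - r)" using assms by simp
  finally show ?thesis .
qed

lemma poisson_kernel_le_cos:
  assumes "0 < r" "r < 1" "cos \<theta> < 1"
  shows "poisson_kernel r \<theta> \<le> (1 - r^2) / (2 * r * (1 - cos \<theta>))"
proof -
  have "1 - 2 * r * cos \<theta> + r^2 - 2 * r * (1 - cos \<theta>) = (1 - r)^2"
    by (simp add: power2_eq_square algebra_simps)
  hence "2 * r * (1 - cos \<theta>) \<le> 1 - 2 * r * cos \<theta> + r^2"
    using zero_le_power2[of "1 - r"] by linarith
  moreover have "0 < 2 * r * (1 - cos \<theta>)" using assms by simp
  moreover have "0 < 1 - 2 * r * cos \<theta> + r^2" using calculation by linarith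
  ultimately show ?thesis
    unfolding poisson_kernel_def norm_one_minus_cis_square using assms
    by (intro divide_left_mono) (auto simp: abs_square_le_1)
qed

text \<open>\<open>poisson_term r \<theta> n\<close> collects the terms \<open>\<plusminus>n\<close> of the Fourier series
  \<open>\<Sum>\<^sub>n\<^sub>\<in>\<^sub>\<int> r\<^bsup>|n|\<^esup> e\<^bsup>in\<theta>\<^esup>\<close> of the Poisson kernel.\<close>
definition poisson_term :: "real \<Rightarrow> real \<Rightarrow> nat \<Rightarrow> complex" where
  "poisson_term r \<theta> n = complex_of_real (r^n) * cis (real n * \<theta>) +
     (if n = 0 then 0 else complex_of_real (r^n) * cis (- (real n * \<theta>)))"

lemma norm_poisson_term_le: "0 \<le> r \<Longrightarrow> norm (poisson_term r \<theta> n) \<le> 2 * r^n"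
  unfolding poisson_term_def
  by (rule order_trans[OF norm_triangle_ineq]) (auto simp: norm_mult norm_power)

lemma poisson_term_sums:
  assumes "0 \<le> r" "r < 1"
  shows "poisson_term r \<theta> sums complex_of_real (poisson_kernel r \<theta>)"
proof -
  define z where "z = complex_of_real r * cis \<theta>"
  have nz: "norm z = r" "norm (cnj z) = r" using assms unfolding z_def by (auto simp: norm_mult)
  have "(\<lambda>n. z^n + (cnj z^n - (if n = 0 then 1 else 0))) sums (1 / (1 - z) + (1 / (1 - cnj z) - 1))"
    using geometric_sums[of z] geometric_sums[of "cnj z"] nz assms
    by (intro sums_add sums_diff sums_single) auto
  moreover have "z^n + (cnj z^n - (if n = 0 then 1 else 0)) = poisson_term r \<theta> n" for n
    unfolding z_def poisson_term_def
    by (simp add: power_mult_distrib Complex.DeMoivre cis_cnj)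
  moreover have "1 / (1 - z) + (1 / (1 - cnj z) - 1) = complex_of_real (poisson_kernel r \<theta>)"
  proof -
    have d: "1 - z \<noteq> 0" "1 - cnj z \<noteq> 0" using nz assms by auto
    have "z * cnj z = complex_of_real (r^2)"
      using complex_norm_square[of z] nz by simp
    moreover have "(1 - z) * cnj (1 - z) = complex_of_real ((cmod (1 - z))^2)"
      using complex_norm_square[of "1 - z"] by simp
    moreover have "1 / (1 - z) + (1 / (1 - cnj z) - 1) = (1 - z * cnj z) / ((1 - z) * cnj (1 - z))"
      using d by (simp add: field_simps)
    ultimately have "1 / (1 - z) + (1 / (1 - cnj z) - 1) = complex_of_real ((1 - r^2) / (cmod (1 - z))^2)"
      by simp
    thus ?thesis unfolding poisson_kernel_def z_def .
  qed
  ultimately show ?thesis by simp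
qed

lemma integral_cis_period:
  fixes k :: int
  assumes "k \<noteq> 0"
  shows "(LINT s:{c..c+2*pi}|lborel. cis (of_int k * (s - t))) = 0"
proof -
  define F where "F s = cis (of_int k * (s - t)) / (\<i> * of_int k)" for s
  have "(LINT s:{c..c+2*pi}|lborel. cis (of_int k * (s - t))) = F (c + 2*pi) - F c"
    unfolding set_lebesgue_integral_def
  proof (rule integral_FTC_atLeastAtMost)
    show "(F has_vector_derivative cis (of_int k * (s - t))) (at s within {c..c+2*pi})" for s
      unfolding F_def has_vector_derivative_def using assms
      by (auto intro!: derivative_eq_intros ext simp: field_simps scaleR_conv_of_real)
  qed (auto intro!: continuous_intros)
  also have "F (c + 2*pi) = F c"
  proof -
    have "cis (of_int k * (c + 2*pi - t)) = cis (of_int k * (c - t)) * cis (2 * pi * of_int k)"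
      by (simp add: cis_mult algebra_simps)
    thus ?thesis unfolding F_def by (simp add: cis_multiple_2pi)
  qed
  finally show ?thesis by simp
qed

lemma integral_poisson_term:
  "(LINT s:{c..c+2*pi}|lborel. poisson_term r (s - t) n) = (if n = 0 then 2 * pi else 0)"
proof (cases "n = 0")
  case True
  thus ?thesis unfolding poisson_term_def
    by (simp add: set_integral_complex_of_real[of _ _ "\<lambda>_. 1", simplified] set_lebesgue_integral_def)
next
  case False
  have int: "set_integrable lborel {c..c+2*pi} (\<lambda>s. cis (of_int k * (s - t)))" for k :: int
    by (rule borel_integrable_atLeastAtMost') (intro continuous_intros)
  have "poisson_term r (s - t) n = complex_of_real (r^n) * cis (of_int (int n) * (s - t))
          + complex_of_real (r^n) * cis (of_int (- int n) * (s - t))" for s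
    unfolding poisson_term_def using False by simp
  thus ?thesis
    using False int[of "int n"] int[of "- int n"] integral_cis_period[of "int n"] integral_cis_period[of "- int n"]
    by (simp add: set_integral_add set_integral_mult_right set_integrable_mult_right)
qed

lemma set_integral_poisson_term_sums:
  fixes h :: "real \<Rightarrow> complex"
  assumes h: "set_integrable lborel A h" and [measurable]: "\<phi> \<in> borel_measurable borel"
    and r: "0 \<le> r" "r < 1"
  shows "(\<lambda>n. LINT t:A|lborel. h t * poisson_term r (\<phi> t) n)
           sums (LINT t:A|lborel. h t * complex_of_real (poisson_kernel r (\<phi> t)))"
proof -
  define g where "g t = indicator A t *\<^sub>R h t" for t
  define f where "f n t = g t * poisson_term r (\<phi> t) n" for n t
  have g: "integrable lborel g" using h unfolding g_def set_integrable_def .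
  hence [measurable]: "g \<in> borel_measurable lborel" by auto
  have f_measurable [measurable]: "f n \<in> borel_measurable lborel" for n
    unfolding f_def poisson_term_def by measurable
  have f_bound: "norm (f n t) \<le> norm (g t) * (2 * r^n)" for n t
    unfolding f_def norm_mult using norm_poisson_term_le[OF r(1)] by (simp add: mult_left_mono)
  have f_integrable: "integrable lborel (f n)" for n
    by (rule Bochner_Integration.integrable_bound[OF integrable_mult_left[OF integrable_norm[OF g], of "2 * r^n"]])
       (use f_bound r in \<open>auto simp: abs_mult\<close>)
  have geom: "summable (\<lambda>n. c * (2 * r^n))" for c :: real
    using r by (intro summable_mult summable_geometric) auto
  have "(\<lambda>n. integral\<^sup>L lborel (f n)) sums (\<integral>t. (\<Sum>n. f n t) \<partial>lborel)"
  proof (rule sums_integral[OF f_integrable])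
    have "summable (\<lambda>n. norm (f n t))" for t
      by (rule summable_comparison_test[OF _ geom[of "norm (g t)"]]) (use f_bound in auto)
    thus "AE t in lborel. summable (\<lambda>n. norm (f n t))" by simp
    have "(\<integral>t. norm (f n t) \<partial>lborel) \<le> (\<integral>t. norm (g t) \<partial>lborel) * (2 * r^n)" for n
      using integral_mono[OF integrable_norm[OF f_integrable] integrable_mult_left[OF integrable_norm[OF g]] f_bound]
      by simp
    thus "summable (\<lambda>n. \<integral>t. norm (f n t) \<partial>lborel)"
      by (intro summable_comparison_test[OF _ geom]) auto
  qed
  moreover have "(\<Sum>n. f n t) = g t * complex_of_real (poisson_kernel r (\<phi> t))" for t
    unfolding f_def using sums_mult[OF poisson_term_sums[OF r]] by (rule sums_unique[symmetric])
  ultimately show ?thesis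
    unfolding f_def g_def set_lebesgue_integral_def by (simp add: mult.assoc)
qed

lemma integral_poisson_kernel_period:
  assumes "0 \<le> r" "r < 1"
  shows "(LINT s:{c..c+2*pi}|lborel. poisson_kernel r (s - t)) = 2 * pi"
proof -
  have "(\<lambda>n. LINT s:{c..c+2*pi}|lborel. 1 * poisson_term r (s - t) n)
          sums (LINT s:{c..c+2*pi}|lborel. 1 * complex_of_real (poisson_kernel r (s - t)))"
    using assms
    by (intro set_integral_poisson_term_sums borel_integrable_atLeastAtMost' continuous_on_const) auto
  hence "(\<lambda>n. complex_of_real (if n = 0 then 2 * pi else 0))
           sums complex_of_real (LINT s:{c..c+2*pi}|lborel. poisson_kernel r (s - t))"
    by (simp add: integral_poisson_term set_integral_complex_of_real)
  moreover have "(\<lambda>n. complex_of_real (if n = 0 then 2 * pi else 0)) sums complex_of_real (2 * pi)"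
    by (rule sums_of_real[OF sums_single])
  ultimately have "complex_of_real (LINT s:{c..c+2*pi}|lborel. poisson_kernel r (s - t))
                     = complex_of_real (2 * pi)"
    by (rule sums_unique2)
  thus ?thesis unfolding of_real_eq_iff .
qed

section \<open>The Poisson kernel as an approximate identity\<close>

lemma cos_lt_one:
  assumes "0 < \<bar>\<theta>\<bar>" "\<bar>\<theta>\<bar> < 2 * pi"
  shows "cos \<theta> < 1"
proof (rule ccontr)
  assume "\<not> cos \<theta> < 1"
  hence "cos \<theta> = 1" using cos_le_one[of \<theta>] by linarith
  then obtain n :: int where n: "\<theta> = of_int n * 2 * pi" using cos_one_2pi_int by blast
  hence "0 < \<bar>of_int n\<bar> * (2 * pi)" "\<bar>of_int n\<bar> * (2 * pi) < 1 * (2 * pi)"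
    using assms by (simp_all add: abs_mult)
  hence "0 < \<bar>n\<bar>" "\<bar>n\<bar> < 1"
    by (simp_all add: zero_less_mult_iff del: mult_less_cancel_right_disj)
  thus False by simp
qed

lemma set_integral_poisson_kernel_nonneg:
  "\<bar>r\<bar> \<le> 1 \<Longrightarrow> 0 \<le> (LINT s:A|lborel. poisson_kernel r (s - t))"
  unfolding set_lebesgue_integral_def
  by (intro Bochner_Integration.integral_nonneg_AE AE_I2)
     (simp add: poisson_kernel_nonneg indicator_def)

lemma poisson_kernel_le_uniform:
  assumes "compact K" "\<forall>\<theta>\<in>K. cos \<theta> < 1"
  obtains C where "\<And>r \<theta>. 1/2 \<le> r \<Longrightarrow> r < 1 \<Longrightarrow> \<theta> \<in> K \<Longrightarrow> poisson_kernel r \<theta> \<le> C * (1 - r)"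
proof (cases "K = {}")
  case False
  obtain \<theta>\<^sub>0 where \<theta>\<^sub>0: "\<theta>\<^sub>0 \<in> K" "\<And>\<theta>. \<theta> \<in> K \<Longrightarrow> cos \<theta> \<le> cos \<theta>\<^sub>0"
    using continuous_attains_sup[OF assms(1) False continuous_on_cos[OF continuous_on_id]] by blast
  define c where "c = 1 - cos \<theta>\<^sub>0"
  have c: "0 < c" using assms(2) \<theta>\<^sub>0(1) unfolding c_def by simp
  show ?thesis
  proof
    fix r \<theta> :: real assume r: "1/2 \<le> r" "r < 1" and \<theta>: "\<theta> \<in> K"
    have "poisson_kernel r \<theta> \<le> (1 - r^2) / (2 * r * (1 - cos \<theta>))"
      using assms(2) \<theta> r by (intro poisson_kernel_le_cos) auto
    also have "\<dots> \<le> (2 * (1 - r)) / c"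
    proof (rule frac_le)
      have "1 - r^2 = (1 - r) * (1 + r)" by (simp add: power2_eq_square algebra_simps)
      thus "1 - r^2 \<le> 2 * (1 - r)" using mult_left_mono[of "1 + r" 2 "1 - r"] r by simp
      have "c \<le> 1 - cos \<theta>" using \<theta>\<^sub>0(2)[OF \<theta>] unfolding c_def by simp
      thus "c \<le> 2 * r * (1 - cos \<theta>)"
        using mult_right_mono[of 1 "2 * r" "1 - cos \<theta>"] r by simp
    qed (use r c in auto)
    finally show "poisson_kernel r \<theta> \<le> 2 / c * (1 - r)" by simp
  qed
qed simp

lemma set_integral_poisson_kernel_tendsto_0:
  fixes r :: "nat \<Rightarrow> real"
  assumes r: "\<And>k. 0 \<le> r k" "\<And>k. r k < 1" "r \<longlonglongrightarrow> 1"
    and away: "\<And>s. s \<in> {a..b} \<Longrightarrow> 0 < \<bar>s - t\<bar> \<and> \<bar>s - t\<bar> < 2 * pi"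
  shows "(\<lambda>k. LINT s:{a..b}|lborel. poisson_kernel (r k) (s - t)) \<longlonglongrightarrow> 0"
proof -
  have "\<forall>\<theta>\<in>{a - t..b - t}. cos \<theta> < 1"
    using away[of "_ + t"] by (auto intro: cos_lt_one)
  then obtain C where
    C: "\<And>r \<theta>. 1/2 \<le> r \<Longrightarrow> r < 1 \<Longrightarrow> \<theta> \<in> {a - t..b - t} \<Longrightarrow> poisson_kernel r \<theta> \<le> C * (1 - r)"
    using poisson_kernel_le_uniform[of "{a - t..b - t}"] by blast
  define M where "M = measure lborel {a..b}"
  have "\<forall>\<^sub>F k in sequentially. 1/2 < r k"
    using r(3) by (rule order_tendstoD) simp
  hence upper: "\<forall>\<^sub>F k in sequentially.
      (LINT s:{a..b}|lborel. poisson_kernel (r k) (s - t)) \<le> M * (C * (1 - r k))"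
  proof eventually_elim
    case (elim k)
    have "(LINT s:{a..b}|lborel. poisson_kernel (r k) (s - t)) \<le> (LINT s:{a..b}|lborel. C * (1 - r k))"
      using elim r C by (intro set_integral_mono set_integrable_poisson_kernel
          borel_integrable_atLeastAtMost' continuous_on_const) auto
    also have "\<dots> = M * (C * (1 - r k))"
      unfolding M_def by (subst set_integral_const) (auto simp: emeasure_lborel_Icc_eq)
    finally show ?case .
  qed
  have lower: "\<forall>\<^sub>F k in sequentially. 0 \<le> (LINT s:{a..b}|lborel. poisson_kernel (r k) (s - t))"
    using r(1,2) by (intro always_eventually allI set_integral_poisson_kernel_nonneg) (simp add: less_imp_le)
  have "(\<lambda>k. M * (C * (1 - r k))) \<longlonglongrightarrow> M * (C * (1 - 1))"
    by (intro tendsto_intros r(3))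
  thus ?thesis using real_tendsto_sandwich[OF lower upper tendsto_const] by simp
qed

lemma set_integral_Icc_split:
  fixes f :: "real \<Rightarrow> 'a::{banach, second_countable_topology}"
  assumes "a \<le> b" "b \<le> c" "set_integrable lborel {a..c} f"
  shows "(LINT s:{a..c}|lborel. f s) = (LINT s:{a..b}|lborel. f s) + (LINT s:{b..c}|lborel. f s)"
proof -
  have "{a..c} = {a..b} \<union> {b..c}" using assms(1,2) by auto
  moreover have "AE s in lborel. \<not> (s \<in> {a..b} \<and> s \<in> {b..c})"
    using AE_lborel_singleton[of b] by eventually_elim auto
  ultimately show ?thesis
    using assms(3) by (simp add: set_integral_Un_AE set_integrable_subset)
qed

text \<open>By the symmetry of the kernel, \<open>poisson_arc x \<delta> r\<close> is the Poisson integral of the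
  indicator function of the arc \<open>[x, x + \<delta>]\<close>.\<close>
definition poisson_arc :: "real \<Rightarrow> real \<Rightarrow> real \<Rightarrow> real \<Rightarrow> real" where
  "poisson_arc x \<delta> r t = (LINT s:{x..x+\<delta>}|lborel. poisson_kernel r (s - t)) / (2 * pi)"

lemma poisson_arc_nonneg: "\<bar>r\<bar> \<le> 1 \<Longrightarrow> 0 \<le> poisson_arc x \<delta> r t"
  unfolding poisson_arc_def by (simp add: set_integral_poisson_kernel_nonneg)

lemma poisson_arc_eq:
  assumes "0 \<le> r" "r < 1" "0 \<le> \<delta>" "\<delta> \<le> 2 * pi"
  shows "poisson_arc x \<delta> r t = 1 - (LINT s:{x+\<delta>..x+2*pi}|lborel. poisson_kernel r (s - t)) / (2 * pi)"
proof -
  have "2 * pi = (LINT s:{x..x+2*pi}|lborel. poisson_kernel r (s - t))"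
    using integral_poisson_kernel_period[OF assms(1,2)] by simp
  also have "\<dots> = (LINT s:{x..x+\<delta>}|lborel. poisson_kernel r (s - t))
                 + (LINT s:{x+\<delta>..x+2*pi}|lborel. poisson_kernel r (s - t))"
    using assms by (intro set_integral_Icc_split set_integrable_poisson_kernel) auto
  finally show ?thesis unfolding poisson_arc_def by (simp add: field_simps)
qed

lemma poisson_arc_le_one:
  assumes "0 \<le> r" "r < 1" "0 \<le> \<delta>" "\<delta> \<le> 2 * pi"
  shows "poisson_arc x \<delta> r t \<le> 1"
  using set_integral_poisson_kernel_nonneg[of r] assms by (simp add: poisson_arc_eq)

lemma poisson_arc_tendsto_one:
  fixes r :: "nat \<Rightarrow> real"
  assumes "\<And>k. 0 \<le> r k" "\<And>k. r k < 1" "r \<longlonglongrightarrow> 1"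
    and "\<delta> \<le> 2 * pi" "x < t" "t < x + \<delta>"
  shows "(\<lambda>k. poisson_arc x \<delta> (r k) t) \<longlonglongrightarrow> 1"
proof -
  have "(\<lambda>k. LINT s:{x+\<delta>..x+2*pi}|lborel. poisson_kernel (r k) (s - t)) \<longlonglongrightarrow> 0"
    using assms by (intro set_integral_poisson_kernel_tendsto_0) auto
  hence "(\<lambda>k. 1 - (LINT s:{x+\<delta>..x+2*pi}|lborel. poisson_kernel (r k) (s - t)) / (2 * pi)) \<longlonglongrightarrow> 1 - 0"
    by (intro tendsto_diff tendsto_const tendsto_divide_zero)
  thus ?thesis using assms by (simp add: poisson_arc_eq)
qed

lemma poisson_arc_tendsto_zero:
  fixes r :: "nat \<Rightarrow> real"
  assumes "\<And>k. 0 \<le> r k" "\<And>k. r k < 1" "r \<longlonglongrightarrow> 1"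
    and "t < x \<or> x + \<delta> < t" "t - 2 * pi < x" "x + \<delta> < t + 2 * pi"
  shows "(\<lambda>k. poisson_arc x \<delta> (r k) t) \<longlonglongrightarrow> 0"
proof -
  have "(\<lambda>k. LINT s:{x..x+\<delta>}|lborel. poisson_kernel (r k) (s - t)) \<longlonglongrightarrow> 0"
    using assms by (intro set_integral_poisson_kernel_tendsto_0) auto
  hence "(\<lambda>k. (LINT s:{x..x+\<delta>}|lborel. poisson_kernel (r k) (s - t)) / (2 * pi)) \<longlonglongrightarrow> 0"
    by (rule tendsto_divide_zero)
  thus ?thesis unfolding poisson_arc_def by simp
qed

lemma integrable_Icc_poisson_product:
  fixes H :: "real \<Rightarrow> real"
  assumes H: "integrable lborel H" "\<And>t. 0 \<le> H t" and r: "0 \<le> r" "r < 1"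
  shows "integrable (lborel \<Otimes>\<^sub>M lborel) (\<lambda>(s, t). indicator {a..b} s * (H t * poisson_kernel r (s - t)))"
    (is "integrable _ ?G")
proof (rule lborel_pair.Fubini_integrable)
  define B where "B = (1 + r) / (1 - r)"
  have [measurable]: "H \<in> borel_measurable lborel" "poisson_kernel r \<in> borel_measurable borel"
    using H(1) r by auto
  have kernel_bounds: "0 \<le> poisson_kernel r \<theta>" "poisson_kernel r \<theta> \<le> B" for \<theta>
    using r poisson_kernel_nonneg[of r] poisson_kernel_le[of r] unfolding B_def by auto
  have HK_le: "H t * poisson_kernel r \<theta> \<le> H t * B" for t \<theta>
    using mult_left_mono[OF kernel_bounds(2) H(2)] .
  have "0 \<le> B" using kernel_bounds[of 0] by linarith
  hence HK_integrable: "integrable lborel (\<lambda>t. H t * poisson_kernel r (s - t))" for s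
    by (intro Bochner_Integration.integrable_bound[OF integrable_mult_left[OF H(1), of B]])
       (use HK_le H(2) kernel_bounds in \<open>auto simp: abs_mult\<close>)
  have HK_integral_bounds: "0 \<le> (\<integral>t. H t * poisson_kernel r (s - t) \<partial>lborel)"
    "(\<integral>t. H t * poisson_kernel r (s - t) \<partial>lborel) \<le> integral\<^sup>L lborel H * B" for s
    using H(2) kernel_bounds(1) integral_mono[OF HK_integrable integrable_mult_left[OF H(1)] HK_le]
    by (auto intro!: integral_nonneg_AE)
  show "?G \<in> borel_measurable (lborel \<Otimes>\<^sub>M lborel)" by measurable
  have "norm (?G (s, t)) = indicator {a..b} s * (H t * poisson_kernel r (s - t))" for s t
    using H(2)[of t] kernel_bounds(1)[of "s - t"] by (simp add: abs_mult)
  hence norm_G: "(\<integral>t. norm (?G (s, t)) \<partial>lborel)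
                 = indicator {a..b} s * (\<integral>t. H t * poisson_kernel r (s - t) \<partial>lborel)" for s
    by simp
  show "integrable lborel (\<lambda>s. \<integral>t. norm (?G (s, t)) \<partial>lborel)"
    unfolding norm_G
  proof (rule Bochner_Integration.integrable_bound)
    show "integrable lborel (\<lambda>s. indicator {a..b} s * (integral\<^sup>L lborel H * B))"
      by (intro integrable_mult_left integrable_real_indicator) (auto simp: emeasure_lborel_Icc_eq)
    show "(\<lambda>s. indicator {a..b} s * (\<integral>t. H t * poisson_kernel r (s - t) \<partial>lborel)) \<in> borel_measurable lborel"
      by measurable
    show "AE s in lborel. norm (indicator {a..b} s * (\<integral>t. H t * poisson_kernel r (s - t) \<partial>lborel))
            \<le> norm (indicator {a..b} s * (integral\<^sup>L lborel H * B))"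
      using HK_integral_bounds by (intro AE_I2) (auto simp: indicator_def intro: order_trans[OF _ abs_ge_self])
  qed
  show "AE s in lborel. integrable lborel (\<lambda>t. ?G (s, t))"
    using HK_integrable by auto
qed

lemma integral_poisson_arc_ge:
  fixes H :: "real \<Rightarrow> real"
  assumes H: "integrable lborel H" "\<And>t. 0 \<le> H t"
    and r: "0 \<le> r" "r < 1" and "0 \<le> \<delta>"
    and ge: "\<And>s. m \<le> (\<integral>t. H t * poisson_kernel r (s - t) \<partial>lborel) / (2 * pi)"
  shows "m * \<delta> \<le> (\<integral>t. H t * poisson_arc x \<delta> r t \<partial>lborel)"
proof -
  define I where "I = {x..x+\<delta>}"
  define G where "G = (\<lambda>(s, t). indicator I s * (H t * poisson_kernel r (s - t)))"
  have G_integrable: "integrable (lborel \<Otimes>\<^sub>M lborel) G"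
    unfolding G_def I_def using H r by (rule integrable_Icc_poisson_product)
  have "2 * pi * (m * \<delta>) = (\<integral>s. indicator I s * (2 * pi * m) \<partial>lborel)"
    unfolding I_def using assms(5) by simp
  also have "\<dots> \<le> (\<integral>s. (\<integral>t. G (s, t) \<partial>lborel) \<partial>lborel)"
  proof (rule integral_mono)
    show "integrable lborel (\<lambda>s. indicator I s * (2 * pi * m))"
      unfolding I_def by (intro integrable_mult_left integrable_real_indicator) (auto simp: emeasure_lborel_Icc_eq)
    show "integrable lborel (\<lambda>s. \<integral>t. G (s, t) \<partial>lborel)"
      using lborel_pair.integrable_fst'[OF G_integrable] by simp
    show "indicator I s * (2 * pi * m) \<le> (\<integral>t. G (s, t) \<partial>lborel)" for s
      using ge[of s] unfolding G_def by (auto simp: indicator_def field_simps)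
  qed
  also have "\<dots> = (\<integral>t. (\<integral>s. G (s, t) \<partial>lborel) \<partial>lborel)"
    using lborel_pair.Fubini_integral[of "\<lambda>s t. G (s, t)"] G_integrable by simp
  also have "\<dots> = (\<integral>t. 2 * pi * (H t * poisson_arc x \<delta> r t) \<partial>lborel)"
    unfolding G_def poisson_arc_def I_def set_lebesgue_integral_def by (simp add: ac_simps)
  also have "\<dots> = 2 * pi * (\<integral>t. H t * poisson_arc x \<delta> r t \<partial>lborel)"
    by (rule integral_mult_right_zero)
  finally show ?thesis by simp
qed

lemma integral_poisson_arc_tendsto:
  fixes H :: "real \<Rightarrow> real" and r :: "nat \<Rightarrow> real"
  assumes H: "integrable lborel H" "\<And>t. t \<notin> {0..<2*pi} \<Longrightarrow> H t = 0"
    and r: "\<And>k. 0 \<le> r k" "\<And>k. r k < 1" "r \<longlonglongrightarrow> 1"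
    and arc: "0 < x" "0 < \<delta>" "x + \<delta> < 2 * pi"
  shows "(\<lambda>k. \<integral>t. H t * poisson_arc x \<delta> (r k) t \<partial>lborel) \<longlonglongrightarrow> (LINT t:{x..x+\<delta>}|lborel. H t)"
proof -
  have [measurable]: "H \<in> borel_measurable lborel" using H(1) by auto
  have [measurable]: "(\<lambda>t. poisson_arc x \<delta> (r k) t) \<in> borel_measurable lborel" for k
  proof -
    have [measurable]: "poisson_kernel (r k) \<in> borel_measurable borel" using r(1,2)[of k] by simp
    show ?thesis unfolding poisson_arc_def set_lebesgue_integral_def by measurable
  qed
  have "(\<lambda>k. \<integral>t. H t * poisson_arc x \<delta> (r k) t \<partial>lborel) \<longlonglongrightarrow> (\<integral>t. H t * indicator {x..x+\<delta>} t \<partial>lborel)"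
  proof (rule integral_dominated_convergence[where w = "\<lambda>t. \<bar>H t\<bar>"])
    show "AE t in lborel. norm (H t * poisson_arc x \<delta> (r k) t) \<le> \<bar>H t\<bar>" for k
      using r(1,2)[of k] arc poisson_arc_nonneg[of "r k"] poisson_arc_le_one[of "r k" \<delta>]
      by (intro AE_I2) (simp add: abs_mult mult_left_le)
    have "AE t in lborel. t \<noteq> x \<and> t \<noteq> x + \<delta>"
      using AE_lborel_singleton[of x] AE_lborel_singleton[of "x + \<delta>"] by eventually_elim auto
    thus "AE t in lborel. (\<lambda>k. H t * poisson_arc x \<delta> (r k) t) \<longlonglongrightarrow> H t * indicator {x..x+\<delta>} t"
    proof eventually_elim
      case (elim t)
      consider "t \<notin> {0..<2*pi}" | "x < t \<and> t < x + \<delta>" | "t \<in> {0..<2*pi}" "t < x \<or> x + \<delta> < t"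
        using elim by force
      thus ?case
      proof cases
        case 2
        hence "(\<lambda>k. poisson_arc x \<delta> (r k) t) \<longlonglongrightarrow> 1"
          using r arc by (intro poisson_arc_tendsto_one) auto
        hence "(\<lambda>k. H t * poisson_arc x \<delta> (r k) t) \<longlonglongrightarrow> H t * 1" by (rule tendsto_mult_left)
        thus ?thesis using 2 by (simp add: indicator_def)
      next
        case 3
        hence "(\<lambda>k. poisson_arc x \<delta> (r k) t) \<longlonglongrightarrow> 0"
          using r arc by (intro poisson_arc_tendsto_zero) auto
        hence "(\<lambda>k. H t * poisson_arc x \<delta> (r k) t) \<longlonglongrightarrow> H t * 0" by (rule tendsto_mult_left)
        thus ?thesis using 3 by (auto simp: indicator_def)
      qed (simp add: H(2))
    qed
  qed (use H(1) in auto)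
  thus ?thesis by (simp add: set_lebesgue_integral_def mult.commute)
qed

lemma set_integral_arc_ge_of_poisson_ge:
  fixes H :: "real \<Rightarrow> real"
  assumes H: "integrable lborel H" "\<And>t. 0 \<le> H t" "\<And>t. t \<notin> {0..<2*pi} \<Longrightarrow> H t = 0"
    and ge: "\<And>r s. 0 < r \<Longrightarrow> r < 1 \<Longrightarrow> m \<le> (\<integral>t. H t * poisson_kernel r (s - t) \<partial>lborel) / (2 * pi)"
    and arc: "0 < x" "0 < \<delta>" "x + \<delta> < 2 * pi"
  shows "m * \<delta> \<le> (LINT t:{x..x+\<delta>}|lborel. H t)"
proof -
  define r where "r k = 1 - 1 / (real k + 2)" for k
  have r: "0 < r k" "r k < 1" for k
    unfolding r_def by (auto simp: field_simps)
  have "(\<lambda>k. 1 - 1 / (real (k + 2))) \<longlonglongrightarrow> 1 - 0"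
    by (intro tendsto_diff tendsto_const LIMSEQ_ignore_initial_segment[OF lim_inverse_n'])
  hence "r \<longlonglongrightarrow> 1" unfolding r_def by (simp add: add.commute)
  hence "(\<lambda>k. \<integral>t. H t * poisson_arc x \<delta> (r k) t \<partial>lborel) \<longlonglongrightarrow> (LINT t:{x..x+\<delta>}|lborel. H t)"
    using H(1,3) r arc by (intro integral_poisson_arc_tendsto) (auto simp: less_imp_le)
  moreover have "m * \<delta> \<le> (\<integral>t. H t * poisson_arc x \<delta> (r k) t \<partial>lborel)" for k
    using H(1,2) r[of k] arc ge[OF r[of k]] by (intro integral_poisson_arc_ge) auto
  ultimately show ?thesis by (intro LIMSEQ_le_const) auto
qed

lemma AE_ge_of_interval_integral_ge:
  fixes f :: "real \<Rightarrow> real"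
  assumes f: "integrable lborel f"
    and ge: "\<And>x \<delta>. a < x \<Longrightarrow> 0 < \<delta> \<Longrightarrow> x + \<delta> < b \<Longrightarrow> m * \<delta> \<le> (LINT t:{x..x+\<delta>}|lborel. f t)"
  shows "AE t in lborel. t \<in> {a<..<b} \<longrightarrow> m \<le> f t"
proof -
  have "f integrable_on cbox c d" for c d :: real
    using integrable_on_subcbox[OF integrable_on_lborel[OF f], of c d] by simp
  txt \<open>Lebesgue's differentiation theorem: off a null set, the averages of \<open>f\<close> over
    \<open>[t, t + h]\<close> tend to \<open>f t\<close>.\<close>
  then obtain N where N: "negligible N"
    "\<And>x e. \<lbrakk>x \<notin> N; 0 < e\<rbrakk> \<Longrightarrow> \<exists>d>0. \<forall>h. 0 < h \<and> h < d \<longrightarrow>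
         norm (integral (cbox x (x + h *\<^sub>R One)) f /\<^sub>R h ^ DIM(real) - f x) < e"
    using integrable_ccontinuous_explicit[of f] by blast
  have "{t \<in> space lebesgue. \<not> (t \<in> {a<..<b} \<longrightarrow> m \<le> f t)} \<subseteq> N"
  proof (rule subsetI, rule ccontr)
    fix t assume "t \<in> {t \<in> space lebesgue. \<not> (t \<in> {a<..<b} \<longrightarrow> m \<le> f t)}" "t \<notin> N"
    hence t: "a < t" "t < b" "f t < m" and "t \<notin> N" by auto
    obtain d where d: "0 < d" "\<And>h. 0 < h \<and> h < d \<Longrightarrow>
         norm (integral (cbox t (t + h *\<^sub>R One)) f /\<^sub>R h ^ DIM(real) - f t) < m - f t"
      using N(2)[OF \<open>t \<notin> N\<close>, of "m - f t"] t(3) by auto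
    define h where "h = min (d / 2) ((b - t) / 2)"
    have h: "0 < h" "h < d" "t + h < b" using d(1) t(1,2) unfolding h_def by (auto simp: min_def field_simps)
    have "set_integrable lborel {t..t+h} f"
      unfolding set_integrable_def by (rule integrable_mult_indicator[OF _ f]) simp
    hence "integral {t..t+h} f = (LINT s:{t..t+h}|lborel. f s)"
      by (simp add: set_borel_integral_eq_integral)
    hence "m * h \<le> integral {t..t+h} f"
      using ge[of t h] t h by simp
    hence "m \<le> integral {t..t+h} f / h"
      using h by (simp add: field_simps)
    moreover have "\<bar>integral {t..t+h} f / h - f t\<bar> < m - f t"
      using d(2)[of h] h by (simp add: divide_inverse mult.commute)
    ultimately show False by linarith
  qed
  moreover have "N \<in> null_sets lebesgue" using N(1) negligible_iff_null_sets by blast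
  ultimately have "AE t in lebesgue. t \<in> {a<..<b} \<longrightarrow> m \<le> f t"
    by (intro AE_I')
  thus ?thesis by (simp add: AE_completion_iff)
qed

lemma AE_ge_of_poisson_integral_ge:
  fixes H :: "real \<Rightarrow> real"
  assumes "integrable lborel H" "\<And>t. 0 \<le> H t" "\<And>t. t \<notin> {0..<2*pi} \<Longrightarrow> H t = 0"
    and "\<And>r s. 0 < r \<Longrightarrow> r < 1 \<Longrightarrow> m \<le> (\<integral>t. H t * poisson_kernel r (s - t) \<partial>lborel) / (2 * pi)"
  shows "AE t in lborel. t \<in> {0<..<2*pi} \<longrightarrow> m \<le> H t"
  using assms(1) by (rule AE_ge_of_interval_integral_ge) (rule set_integral_arc_ge_of_poisson_ge[OF assms])

section \<open>Arc-length measure on the unit circle\<close>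

lemma sets_T_meas [simp, measurable_cong]: "sets T_meas = sets borel"
  unfolding T_meas_def by simp

lemma measurable_T_meas [simp]: "measurable T_meas N = measurable borel N"
  by (rule measurable_cong_sets) simp_all

lemma measurable_cis_restrict: "cis \<in> measurable (restrict_space lborel {0..<2*pi}) borel"
  by (rule measurable_restrict_space1) simp

lemma integral_T_meas:
  fixes f :: "complex \<Rightarrow> 'b::{banach, second_countable_topology}"
  assumes "f \<in> borel_measurable borel"
  shows "integral\<^sup>L T_meas f = (LINT t:{0..<2*pi}|lborel. f (cis t))"
  unfolding T_meas_def set_lebesgue_integral_def
  by (subst integral_distr[OF measurable_cis_restrict assms], subst integral_restrict_space) auto

lemma integrable_T_meas_iff:
  fixes f :: "complex \<Rightarrow> 'b::{banach, second_countable_topology}"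
  assumes "f \<in> borel_measurable borel"
  shows "integrable T_meas f \<longleftrightarrow> set_integrable lborel {0..<2*pi} (\<lambda>t. f (cis t))"
  unfolding T_meas_def set_integrable_def
  by (subst integrable_distr_eq[OF measurable_cis_restrict assms], subst integrable_restrict_space) auto

lemma AE_T_meas_iff:
  assumes "{z. P z} \<in> sets borel"
  shows "(AE z in T_meas. P z) \<longleftrightarrow> (AE t in lborel. t \<in> {0..<2*pi} \<longrightarrow> P (cis t))"
  unfolding T_meas_def
  by (subst AE_distr_iff[OF measurable_cis_restrict]) (use assms in \<open>auto simp: AE_restrict_space_iff\<close>)

lemma AE_T_meas_norm_eq_1: "AE z in T_meas. cmod z = 1"
  by (subst AE_T_meas_iff) auto

lemma L2_T_integrable:
  assumes "L2_T f"
  shows "integrable T_meas f"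
proof -
  have [measurable]: "f \<in> borel_measurable borel" and sq: "integrable T_meas (\<lambda>z. (cmod (f z))^2)"
    using assms unfolding L2_T_def by auto
  have "integrable T_meas (\<lambda>_. 1 :: real)"
    unfolding integrable_T_meas_iff[OF borel_measurable_const] set_integrable_def
    by (simp add: emeasure_lborel_Ico integrable_real_indicator)
  hence int: "integrable T_meas (\<lambda>z. 1 + (cmod (f z))^2)"
    using sq by (rule Bochner_Integration.integrable_add)
  have "norm (f z) \<le> norm (1 + (cmod (f z))^2)" for z
    using zero_le_power2[of "cmod (f z) - 1/2"] by (simp add: power2_eq_square algebra_simps)
  thus ?thesis
    by (intro Bochner_Integration.integrable_bound[OF int]) auto
qed

lemma borel_measurable_power_int [measurable]: "(\<lambda>z::complex. z powi k) \<in> borel_measurable borel"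
  by (cases "k \<ge> 0") (simp_all add: power_int_def)

lemma fourier_coeff_eq:
  assumes "f \<in> borel_measurable borel"
  shows "fourier_coeff f k = (LINT t:{0..<2*pi}|lborel. f (cis t) * cis (- (of_int k * t))) / (2 * pi)"
  unfolding fourier_coeff_def using assms by (subst integral_T_meas) (auto simp: cis_power_int)

section \<open>Boundary values of \<open>H\<^sup>2\<close> functions\<close>

lemma star_eq_cnj_on_circle: "cmod z = 1 \<Longrightarrow> star f z = cnj (f z)"
  unfolding star_def by (simp add: divide_conv_cnj)

lemma H2_D_ext_eq_poisson_integral:
  assumes "H2_D g" "0 \<le> r" "r < 1"
  shows "H2_D_ext g (complex_of_real r * cis s)
           = (LINT t:{0..<2*pi}|lborel. g (cis t) * complex_of_real (poisson_kernel r (s - t))) / (2 * pi)"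
proof -
  define S where "S = {0..<2*pi}"
  have [measurable]: "g \<in> borel_measurable borel"
    and coeff_neg: "\<And>k::int. k < 0 \<Longrightarrow> fourier_coeff g k = 0"
    using assms(1) unfolding H2_D_def L2_T_def by auto
  have "integrable T_meas g" using L2_T_integrable assms(1) unfolding H2_D_def by blast
  hence g_integrable: "set_integrable lborel S (\<lambda>t. g (cis t))"
    unfolding S_def by (simp add: integrable_T_meas_iff)
  have coeff: "(LINT t:S|lborel. g (cis t) * cis (- (of_int k * t))) = 2 * pi * fourier_coeff g k" for k
    by (simp add: fourier_coeff_eq S_def)
  have coeff_term: "(LINT t:S|lborel. g (cis t) * poisson_term r (s - t) n)
                = 2 * pi * (fourier_coeff g (int n) * (complex_of_real r * cis s)^n)" for n
  proof -
    have integrable: "set_integrable lborel S (\<lambda>t. g (cis t) * cis (c * t))" for c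
      unfolding set_integrable_def
    proof (rule Bochner_Integration.integrable_bound[OF integrable_norm[OF g_integrable[unfolded set_integrable_def]]])
      show "(\<lambda>t. indicator S t *\<^sub>R (g (cis t) * cis (c * t))) \<in> borel_measurable lborel"
        unfolding S_def by measurable
    qed (auto simp: norm_mult indicator_def)
    have "g (cis t) * poisson_term r (s - t) n
          = complex_of_real (r^n) * cis (real n * s) * (g (cis t) * cis (- (real n * t)))
            + (if n = 0 then 0 else complex_of_real (r^n) * cis (- (real n * s)) * (g (cis t) * cis (real n * t)))" for t
      unfolding poisson_term_def by (simp add: cis_mult algebra_simps)
    hence "(LINT t:S|lborel. g (cis t) * poisson_term r (s - t) n)
           = complex_of_real (r^n) * cis (real n * s) * (2 * pi * fourier_coeff g (int n))
             + (if n = 0 then 0 else complex_of_real (r^n) * cis (- (real n * s)) * (2 * pi * fourier_coeff g (- int n)))"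
      using integrable[of "- real n"] integrable[of "real n"] coeff[of "int n"] coeff[of "- int n"]
      by (cases "n = 0") (simp_all add: poisson_term_def set_integral_add set_integral_mult_right set_integrable_mult_right)
    thus ?thesis
      using coeff_neg[of "- int n"] by (simp add: power_mult_distrib Complex.DeMoivre)
  qed
  have "(\<lambda>n. 2 * pi * (fourier_coeff g (int n) * (complex_of_real r * cis s)^n))
          sums (LINT t:S|lborel. g (cis t) * complex_of_real (poisson_kernel r (s - t)))"
    unfolding coeff_term[symmetric] using g_integrable assms(2,3) by (intro set_integral_poisson_term_sums) auto
  from sums_divide[OF this, of "2 * pi"] show ?thesis
    unfolding H2_D_ext_def S_def by (simp add: sums_iff)
qed

lemma inf_abs_Dstar_le_norm_H2_D_ext:
  assumes "cmod w < 1"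
  shows "inf_abs_Dstar a \<le> cmod (H2_D_ext (star a) w)"
proof -
  have "cmod (H2_D_ext (star a) w) \<in> insert (cmod (H2_Dstar_inf a)) {cmod (H2_Dstar_ext a z) | z. 1 < cmod z}"
  proof (cases "w = 0")
    case False
    hence "1 < cmod (1 / cnj w)" "H2_Dstar_ext a (1 / cnj w) = cnj (H2_D_ext (star a) w)"
      using assms by (simp_all add: norm_divide H2_Dstar_ext_def)
    thus ?thesis by force
  qed (simp add: H2_Dstar_inf_def)
  thus ?thesis unfolding inf_abs_Dstar_def by (rule cInf_lower) (auto intro: bdd_belowI[of _ 0])
qed

lemma inf_abs_Dstar_le_poisson_integral:
  assumes "H2_Dstar a" "0 \<le> r" "r < 1"
  shows "inf_abs_Dstar a
           \<le> (LINT t:{0..<2*pi}|lborel. cmod (star a (cis t)) * poisson_kernel r (s - t)) / (2 * pi)"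
proof -
  define S where "S = {0..<2*pi::real}"
  have g: "H2_D (star a)" using assms(1) unfolding H2_Dstar_def .
  have "inf_abs_Dstar a \<le> cmod (H2_D_ext (star a) (complex_of_real r * cis s))"
    using assms(2,3) by (intro inf_abs_Dstar_le_norm_H2_D_ext) (simp add: norm_mult)
  also have "\<dots> = cmod (LINT t:S|lborel. star a (cis t) * complex_of_real (poisson_kernel r (s - t))) / (2 * pi)"
    using assms(2,3) by (simp add: H2_D_ext_eq_poisson_integral[OF g] norm_divide S_def)
  also have "\<dots> \<le> (LINT t:S|lborel. cmod (star a (cis t)) * poisson_kernel r (s - t)) / (2 * pi)"
  proof (rule divide_right_mono)
    have "cmod (LINT t:S|lborel. star a (cis t) * complex_of_real (poisson_kernel r (s - t)))
          \<le> (\<integral>t. norm (indicator S t *\<^sub>R (star a (cis t) * complex_of_real (poisson_kernel r (s - t)))) \<partial>lborel)"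
      unfolding set_lebesgue_integral_def by (rule integral_norm_bound)
    also have "\<dots> = (LINT t:S|lborel. cmod (star a (cis t)) * poisson_kernel r (s - t))"
      unfolding set_lebesgue_integral_def using poisson_kernel_nonneg[of r] assms(2,3)
      by (intro Bochner_Integration.integral_cong) (auto simp: norm_mult indicator_def)
    finally show "cmod (LINT t:S|lborel. star a (cis t) * complex_of_real (poisson_kernel r (s - t)))
                  \<le> (LINT t:S|lborel. cmod (star a (cis t)) * poisson_kernel r (s - t))" .
  qed simp
  finally show ?thesis unfolding S_def .
qed

lemma inf_abs_Dstar_le_norm_AE:
  assumes "H2_Dstar a"
  shows "AE z in T_meas. inf_abs_Dstar a \<le> cmod (a z)"
proof -
  have g: "L2_T (star a)" and [measurable]: "star a \<in> borel_measurable borel"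
    using assms unfolding H2_Dstar_def H2_D_def L2_T_def by simp_all
  define H where "H t = indicator {0..<2*pi} t * cmod (star a (cis t))" for t
  have H_integrable: "integrable lborel H"
    using integrable_norm[OF L2_T_integrable[OF g]]
    unfolding H_def by (simp add: integrable_T_meas_iff set_integrable_def)
  have poisson_ge: "inf_abs_Dstar a \<le> (\<integral>t. H t * poisson_kernel r (s - t) \<partial>lborel) / (2 * pi)"
    if "0 < r" "r < 1" for r s
    using inf_abs_Dstar_le_poisson_integral[OF assms, of r s] that
    unfolding H_def set_lebesgue_integral_def by (simp add: mult.assoc)
  have "AE t in lborel. t \<in> {0<..<2*pi} \<longrightarrow> inf_abs_Dstar a \<le> H t"
    by (rule AE_ge_of_poisson_integral_ge[OF H_integrable _ _ poisson_ge]) (simp_all add: H_def)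
  hence "AE t in lborel. t \<in> {0..<2*pi} \<longrightarrow> inf_abs_Dstar a \<le> cmod (star a (cis t))"
    using AE_lborel_singleton[of 0] by eventually_elim (auto simp: H_def)
  hence "AE z in T_meas. inf_abs_Dstar a \<le> cmod (star a z)"
    by (subst AE_T_meas_iff) auto
  with AE_T_meas_norm_eq_1 show ?thesis
    by eventually_elim (simp add: star_eq_cnj_on_circle)
qed

lemma class_L_norm_square_sum_AE:
  assumes "class_L a b"
  shows "AE z in T_meas. (cmod (a z))^2 + (cmod (b z))^2 = 1"
  using assms[unfolded class_L_def, THEN conjunct2, THEN conjunct2, THEN conjunct1] AE_T_meas_norm_eq_1
proof eventually_elim
  case (elim z)
  hence "a z * cnj (a z) + b z * cnj (b z) = 1" by (simp add: star_eq_cnj_on_circle)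
  hence "complex_of_real ((cmod (a z))^2 + (cmod (b z))^2) = 1"
    by (simp only: of_real_add complex_norm_square)
  thus ?case by (metis of_real_1 of_real_eq_iff)
qed

theorem lemma7p3:
  fixes \<epsilon> :: real and a b :: "complex \<Rightarrow> complex"
  assumes "0 < \<epsilon>" and "\<epsilon> < 1 - 2 powr (-1/2)"
    and "class_B_eps \<epsilon> a b"
  shows "esssup T_meas (\<lambda>z. ereal (cmod (b z) / cmod (a z)))
           \<le> ereal (1 - (3 powr (3/2) / 2) * \<epsilon>)"
proof -
  have L: "class_L a b" and inf: "2 powr (-1/2) + \<epsilon> \<le> inf_abs_Dstar a"
    using assms(3) unfolding class_B_eps_def class_B_def by auto
  hence [measurable]: "a \<in> borel_measurable borel" "b \<in> borel_measurable borel"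
    and "H2_Dstar a"
    unfolding class_L_def by auto
  have "AE z in T_meas. cmod (b z) / cmod (a z) \<le> 1 - (3 powr (3/2) / 2) * \<epsilon>"
    using class_L_norm_square_sum_AE[OF L] inf_abs_Dstar_le_norm_AE[OF \<open>H2_Dstar a\<close>]
  proof eventually_elim
    case (elim z)
    thus ?case using inf assms(1) by (intro ratio_le_of_sum_squares_eq_1) auto
  qed
  thus ?thesis by (intro esssup_I) auto
qed

end
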